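(* For every $n\ge2$, the total number of edges, summed over all plane trees $T$ on $n$ vertices and all leaves $\ell$ of $T$, of the path from the root to $\ell$ equals $4^{n-2}$. The total number of leaves over all plane trees on $n$ vertices is $\frac12\binom{2n-2}{n-1}$. Consequently, the expected length of the root-to-leaf path, for a uniformly random pair (plane tree on $n$ vertices, leaf of it), is $$\frac{(2n-2)!!}{2\,(2n-3)!!}=\frac{\sqrt{\pi n}}{2}+O\Bigl(\frac1{\sqrt n}\Bigr).$$
   Context: General (plane) trees are rooted trees in which every vertex may have any number of children and the children of each vertex are linearly ordered. The size of a tree is its number of vertices, and a leaf is a vertex with no children. The double factorials are $(2m)!!=2\cdot4\cdots(2m)$ and $(2m-1)!!=1\cdot3\cdots(2m-1)$, with $0!!=1$. *)

theory Defs
  imports Complex_Main "HOL-Library.Landau_Symbols"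
begin

datatype ptree = Node "ptree list"

fun tsize :: "ptree \<Rightarrow> nat" where
  "tsize (Node ts) = Suc (sum_list (map tsize ts))"

text \<open>Leaves, identified by their address: the list of child indices along the
path from the root. The number of edges of the root-to-leaf path is the
length of the address.\<close>
function leaves :: "ptree \<Rightarrow> nat list set" where
  "leaves (Node ts) =
     (if ts = [] then {[]}
      else (\<Union>i<length ts. (Cons i) ` leaves (ts ! i)))"
  by pat_completeness auto
termination
  by (relation "measure size") (auto simp: less_Suc_eq_le intro!: size_list_estimation'[OF nth_mem])

definition trees :: "nat \<Rightarrow> ptree set" where
  "trees n = {t. tsize t = n}"

fun dfact :: "nat \<Rightarrow> nat" where
  "dfact 0 = 1"
| "dfact (Suc 0) = 1"
| "dfact (Suc (Suc m)) = Suc (Suc m) * dfact m"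

definition total_leaf_depth :: "nat \<Rightarrow> nat" where
  "total_leaf_depth n = (\<Sum>t\<in>trees n. \<Sum>p\<in>leaves t. length p)"

definition total_leaves :: "nat \<Rightarrow> nat" where
  "total_leaves n = (\<Sum>t\<in>trees n. card (leaves t))"

definition expected_leaf_depth :: "nat \<Rightarrow> real" where
  "expected_leaf_depth n = real (total_leaf_depth n) / real (total_leaves n)"

end

(* With x marking vertices,
   the forest series F, the leaf series L and the leaf-depth series D satisfy
     F = 1 + x F^2,   L = x (1 + L F^2),   D = x (D + L) F^2,
   since every leaf of a subtree is one edge deeper in the whole tree. Using x F^2 = F - 1 these
   become L (2 - F) = x and D (2 - F) = L (F - 1), and (2 - F)^2 = F^2 (1 - 4x) identifies
   C (2 - F) = F for C = sum of binom(2n, n) x^n = (1 - 4x)^(-1/2). Hence 2L = x (1 + C) and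
   D = x^2 / (1 - 4x), whose coefficients are binom(2n-2, n-1) and 4^(n-2).
   The quotient is then (2m)!! / (2 (2m-1)!!) with m = n - 1, whose square lies between
   pi m and pi (m + 1/2) by Wallis' product; this gives the O(1/sqrt n) error term. *)

theory Submission
  imports Defs "HOL-Computational_Algebra.Formal_Power_Series" "HOL-Analysis.Gamma_Function"
begin

fun leaf_count :: "ptree \<Rightarrow> nat" where
  "leaf_count (Node ts) = (if ts = [] then 1 else sum_list (map leaf_count ts))"

fun leaf_depth_sum :: "ptree \<Rightarrow> nat" where
  "leaf_depth_sum (Node ts) = sum_list (map (\<lambda>t. leaf_depth_sum t + leaf_count t) ts)"

lemma finite_leaves: "finite (leaves t)"
  by (induction t) auto

lemma sum_leaves_Node:
  assumes "ts \<noteq> []"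
  shows "(\<Sum>p\<in>leaves (Node ts). f p) = (\<Sum>i<length ts. \<Sum>p\<in>leaves (ts ! i). f (i # p))"
proof -
  have "(\<Sum>p\<in>leaves (Node ts). f p) = (\<Sum>i<length ts. \<Sum>p\<in>Cons i ` leaves (ts ! i). f p)"
    using assms by (subst leaves.simps) (auto intro!: sum.UNION_disjoint simp: finite_leaves)
  also have "\<dots> = (\<Sum>i<length ts. \<Sum>p\<in>leaves (ts ! i). f (i # p))"
    by (simp add: sum.reindex)
  finally show ?thesis .
qed

lemma card_leaves: "card (leaves t) = leaf_count t"
proof (induction t)
  case (Node ts)
  show ?case
  proof (cases "ts = []")
    case False
    then show ?thesis
      using Node sum_leaves_Node[OF False, of "\<lambda>_. 1::nat"]
      by (simp add: sum_list_sum_nth atLeast0LessThan del: leaves.simps)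
  qed simp
qed

lemma sum_length_leaves: "(\<Sum>p\<in>leaves t. length p) = leaf_depth_sum t"
proof (induction t)
  case (Node ts)
  show ?case
  proof (cases "ts = []")
    case False
    then show ?thesis
      using Node by (simp add: sum_leaves_Node sum_Suc sum.distrib card_leaves[symmetric]
                               sum_list_sum_nth atLeast0LessThan del: leaves.simps)
  qed simp
qed

definition forests :: "nat \<Rightarrow> ptree list set" where
  "forests n = {ts. sum_list (map tsize ts) = n}"

lemma tsize_pos: "0 < tsize t"
  by (cases t) simp

lemma trees_0: "trees 0 = {}"
  using tsize_pos by (auto simp: trees_def)

lemma trees_Suc: "trees (Suc n) = Node ` forests n"
proof -
  have "t \<in> Node ` forests n" if "tsize t = Suc n" for t
    using that by (cases t) (auto simp: forests_def)
  then show ?thesis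
    by (auto simp: trees_def forests_def)
qed

lemma forests_Cons:
  "{ts \<in> forests n. ts \<noteq> []} = (\<Union>i\<le>n. (\<lambda>(t, r). t # r) ` (trees i \<times> forests (n - i)))"
  by (auto simp: forests_def trees_def neq_Nil_conv image_iff)

lemma finite_forests: "finite (forests n)"
proof (induction n rule: less_induct)
  case (less n)
  have "finite (trees i \<times> forests (n - i))" if "i \<le> n" for i
    using less that by (cases i) (auto simp: trees_0 trees_Suc)
  then have "finite {ts \<in> forests n. ts \<noteq> []}"
    by (simp add: forests_Cons)
  moreover have "forests n \<subseteq> insert [] {ts \<in> forests n. ts \<noteq> []}"
    by blast
  ultimately show ?case
    using finite_subset by blast
qed

lemma finite_trees: "finite (trees n)"
  by (cases n) (simp_all add: trees_0 trees_Suc finite_forests)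

definition tree_gf :: "(ptree \<Rightarrow> 'a::comm_semiring_1) \<Rightarrow> 'a fps" where
  "tree_gf f = Abs_fps (\<lambda>n. \<Sum>t\<in>trees n. f t)"

definition forest_gf :: "(ptree list \<Rightarrow> 'a::comm_semiring_1) \<Rightarrow> 'a fps" where
  "forest_gf g = Abs_fps (\<lambda>n. \<Sum>ts\<in>forests n. g ts)"

lemma tree_gf_Node: "tree_gf f = fps_X * forest_gf (\<lambda>ts. f (Node ts))"
  by (rule fps_ext)
     (auto simp: tree_gf_def forest_gf_def trees_0 trees_Suc sum.reindex inj_on_def gr0_conv_Suc)

lemma forest_gf_add: "forest_gf (\<lambda>ts. g ts + h ts) = forest_gf g + forest_gf h"
  by (rule fps_ext) (simp add: forest_gf_def sum.distrib)

lemma forest_gf_Nil_Cons: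
  "forest_gf g = fps_const (g []) + forest_gf (\<lambda>ts. case ts of [] \<Rightarrow> 0 | t # r \<Rightarrow> g (t # r))"
proof -
  have "g = (\<lambda>ts. (if ts = [] then g [] else 0) + (case ts of [] \<Rightarrow> 0 | t # r \<Rightarrow> g (t # r)))"
    by (auto simp: fun_eq_iff split: list.split)
  then have "forest_gf g = forest_gf (\<lambda>ts. if ts = [] then g [] else 0)
      + forest_gf (\<lambda>ts. case ts of [] \<Rightarrow> 0 | t # r \<Rightarrow> g (t # r))"
    by (metis forest_gf_add)
  moreover have "[] \<in> forests n \<longleftrightarrow> n = 0" for n
    by (simp add: forests_def)
  then have "forest_gf (\<lambda>ts. if ts = [] then g [] else 0) = fps_const (g [])"
    by (intro fps_ext) (simp add: forest_gf_def finite_forests sum.delta)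
  ultimately show ?thesis
    by simp
qed

lemma forest_gf_Cons:
  "forest_gf (\<lambda>ts. case ts of [] \<Rightarrow> 0 | t # r \<Rightarrow> a t * b r) = tree_gf a * forest_gf b"
proof (rule fps_ext)
  fix n
  let ?g = "\<lambda>ts. case ts of [] \<Rightarrow> 0 | t # r \<Rightarrow> a t * b r"
  have "(\<Sum>ts\<in>forests n. ?g ts) = (\<Sum>ts\<in>{ts \<in> forests n. ts \<noteq> []}. ?g ts)"
    by (rule sum.mono_neutral_right) (auto simp: finite_forests)
  also have "\<dots> = (\<Sum>i\<le>n. \<Sum>(t, r)\<in>trees i \<times> forests (n - i). a t * b r)"
    unfolding forests_Cons
    by (subst sum.UNION_disjoint)
       (auto simp: finite_trees finite_forests sum.reindex inj_on_def intro!: sum.cong,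
        auto simp: trees_def)
  also have "\<dots> = (\<Sum>i\<le>n. (\<Sum>t\<in>trees i. a t) * (\<Sum>r\<in>forests (n - i). b r))"
    by (simp add: sum_product sum.cartesian_product)
  finally show "fps_nth (forest_gf ?g) n = fps_nth (tree_gf a * forest_gf b) n"
    by (simp add: forest_gf_def tree_gf_def fps_mult_nth atLeast0AtMost)
qed

lemma tree_gf_add: "tree_gf (\<lambda>t. f t + g t) = tree_gf f + tree_gf g"
  by (rule fps_ext) (simp add: tree_gf_def sum.distrib)

lemma forest_gf_one:
  "forest_gf (\<lambda>_. 1 :: 'a::comm_semiring_1) = 1 + tree_gf (\<lambda>_. 1) * forest_gf (\<lambda>_. 1)"
  using forest_gf_Cons[of "\<lambda>_. 1 :: 'a" "\<lambda>_. 1"]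
  by (subst forest_gf_Nil_Cons) (simp cong: list.case_cong)

lemma forest_gf_sum_list:
  "forest_gf (\<lambda>ts. sum_list (map f ts))
     = tree_gf f * forest_gf (\<lambda>_. 1) + tree_gf (\<lambda>_. 1) * forest_gf (\<lambda>ts. sum_list (map f ts))"
proof -
  have "(\<lambda>ts. case ts of [] \<Rightarrow> 0 | t # r \<Rightarrow> sum_list (map f (t # r)))
      = (\<lambda>ts. (case ts of [] \<Rightarrow> 0 | t # r \<Rightarrow> f t * 1) + (case ts of [] \<Rightarrow> 0 | t # r \<Rightarrow> 1 * sum_list (map f r)))"
    by (auto simp: fun_eq_iff split: list.split)
  then show ?thesis
    by (subst forest_gf_Nil_Cons) (simp only: forest_gf_add forest_gf_Cons, simp)
qed

definition forest_series :: "real fps" where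
  "forest_series = forest_gf (\<lambda>_. 1)"

definition leaf_series :: "real fps" where
  "leaf_series = tree_gf (\<lambda>t. real (leaf_count t))"

definition depth_series :: "real fps" where
  "depth_series = tree_gf (\<lambda>t. real (leaf_depth_sum t))"

lemma forest_series_nth_0: "fps_nth forest_series 0 = 1"
proof -
  have "forests 0 = {[]}"
    using tsize_pos by (auto simp: forests_def) (metis gr_implies_not0 list.set_intros(1) neq_Nil_conv)
  then show ?thesis
    by (simp add: forest_series_def forest_gf_def)
qed

lemma tree_gf_one: "tree_gf (\<lambda>_. 1) = fps_X * forest_series"
  by (simp add: tree_gf_Node forest_series_def)

lemma forest_series_eq: "forest_series = 1 + fps_X * forest_series ^ 2"
  using forest_gf_one[where 'a = real]
  by (simp add: tree_gf_one forest_series_def[symmetric] power2_eq_square mult.assoc)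

lemma forest_gf_sum_list_eq:
  "forest_gf (\<lambda>ts. sum_list (map f ts)) = tree_gf f * forest_series ^ 2"
proof -
  let ?G = "forest_gf (\<lambda>ts. sum_list (map f ts))"
  have inv: "(1 - fps_X * forest_series) * forest_series = 1"
    using forest_series_eq by (simp add: algebra_simps power2_eq_square)
  have "?G * (1 - fps_X * forest_series) = tree_gf f * forest_series"
    using forest_gf_sum_list[of f] by (simp add: tree_gf_one forest_series_def[symmetric] algebra_simps)
  then have "?G * ((1 - fps_X * forest_series) * forest_series) = tree_gf f * forest_series ^ 2"
    by (simp add: power2_eq_square mult.assoc[symmetric])
  then show ?thesis
    by (simp add: inv)
qed

lemma leaf_series_eq: "leaf_series = fps_X * (1 + leaf_series * forest_series ^ 2)"
proof -
  let ?f = "\<lambda>t. real (leaf_count t)"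
  have "forest_gf (\<lambda>ts. ?f (Node ts)) = 1 + forest_gf (\<lambda>ts. sum_list (map ?f ts))"
    by (subst (1 2) forest_gf_Nil_Cons) (simp add: sum_list_of_nat[symmetric] o_def cong: list.case_cong)
  then show ?thesis
    by (simp add: leaf_series_def tree_gf_Node[of ?f] forest_gf_sum_list_eq)
qed

lemma depth_series_eq: "depth_series = fps_X * ((depth_series + leaf_series) * forest_series ^ 2)"
proof -
  have "forest_gf (\<lambda>ts. real (leaf_depth_sum (Node ts)))
      = forest_gf (\<lambda>ts. sum_list (map (\<lambda>t. real (leaf_depth_sum t) + real (leaf_count t)) ts))"
    by (simp add: sum_list_of_nat[symmetric] o_def)
  then show ?thesis
    by (simp add: depth_series_def leaf_series_def tree_gf_Node[of "\<lambda>t. real (leaf_depth_sum t)"]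
        forest_gf_sum_list_eq tree_gf_add)
qed

lemma central_binomial_Suc:
  "Suc n * ((2 * Suc n) choose Suc n) = 2 * (2 * n + 1) * ((2 * n) choose n)"
proof -
  have "Suc n * ((2 * Suc n) choose Suc n) = 2 * Suc n * (Suc (2 * n) choose n)"
    using Suc_times_binomial[of n "Suc (2 * n)"] by (simp del: binomial_Suc_Suc)
  also have "Suc (2 * n) choose n = Suc (2 * n) choose Suc n"
    using binomial_symmetric[of n "Suc (2 * n)"] by simp
  also have "2 * Suc n * \<dots> = 2 * (Suc (2 * n) * ((2 * n) choose n))"
    by (simp only: Suc_times_binomial mult.assoc)
  finally show ?thesis
    by simp
qed

definition central_binomial_series :: "real fps" where
  "central_binomial_series = Abs_fps (\<lambda>n. real ((2 * n) choose n))"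

lemma central_binomial_series_deriv:
  "(1 - 4 * fps_X) * fps_deriv central_binomial_series = 2 * central_binomial_series"
proof (rule fps_ext)
  fix n
  let ?c = "\<lambda>n. real ((2 * n) choose n)"
  have "fps_nth ((1 - 4 * fps_X) * fps_deriv central_binomial_series) n
      = real (Suc n) * ?c (Suc n) - 4 * real n * ?c n"
    by (cases n) (simp_all add: central_binomial_series_def fps_deriv_nth numeral_fps_const
                           algebra_simps del: of_nat_Suc binomial_Suc_Suc)
  also have "\<dots> = 2 * ?c n"
    using arg_cong[OF central_binomial_Suc[of n], of real]
    by (simp add: algebra_simps del: binomial_Suc_Suc)
  finally show "fps_nth ((1 - 4 * fps_X) * fps_deriv central_binomial_series) n
      = fps_nth (2 * central_binomial_series) n"
    by (simp add: central_binomial_series_def numeral_fps_const)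
qed

lemma central_binomial_series_sq: "(1 - 4 * fps_X) * central_binomial_series ^ 2 = 1"
proof -
  let ?C = central_binomial_series
  have "fps_deriv ((1 - 4 * fps_X) * ?C ^ 2) = 2 * ?C * ((1 - 4 * fps_X) * fps_deriv ?C) - 4 * ?C ^ 2"
    by (simp add: fps_deriv_power algebra_simps power2_eq_square)
  also have "\<dots> = 2 * ?C * (2 * ?C) - 4 * ?C ^ 2"
    by (simp only: central_binomial_series_deriv)
  also have "\<dots> = 0"
    by (simp add: algebra_simps power2_eq_square)
  finally have "(1 - 4 * fps_X) * ?C ^ 2 = fps_const (fps_nth ((1 - 4 * fps_X) * ?C ^ 2) 0)"
    using fps_deriv_eq_0_iff by blast
  then show ?thesis
    by (simp add: central_binomial_series_def power2_eq_square numeral_fps_const)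
qed

lemma fps_nonzero_if_nth_0: "fps_nth f 0 \<noteq> 0 \<Longrightarrow> f \<noteq> 0"
  by auto

lemma X_forest_series_sq: "fps_X * forest_series ^ 2 = forest_series - 1"
  using forest_series_eq by (simp add: algebra_simps)

lemma two_minus_forest_series_nonzero: "2 - forest_series \<noteq> 0"
  by (rule fps_nonzero_if_nth_0) (simp add: forest_series_nth_0 numeral_fps_const)

lemma leaf_series_mult: "leaf_series * (2 - forest_series) = fps_X"
  using leaf_series_eq X_forest_series_sq by algebra

lemma depth_series_mult: "depth_series * (2 - forest_series) = leaf_series * (forest_series - 1)"
  using depth_series_eq X_forest_series_sq by algebra

lemma two_minus_forest_series_sq: "(2 - forest_series) ^ 2 = forest_series ^ 2 * (1 - 4 * fps_X)"
  using X_forest_series_sq by algebra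

lemma central_binomial_series_mult: "central_binomial_series * (2 - forest_series) = forest_series"
proof -
  \<comment> \<open>Squaring shows \<open>C (2 - F) = \<plusminus>F\<close>; the constant terms fix the sign.\<close>
  let ?P = "central_binomial_series * (2 - forest_series)"
  have "(?P - forest_series) * (?P + forest_series) = 0"
    using two_minus_forest_series_sq central_binomial_series_sq by algebra
  moreover have "?P + forest_series \<noteq> 0"
    by (rule fps_nonzero_if_nth_0)
       (simp add: central_binomial_series_def forest_series_nth_0 numeral_fps_const)
  ultimately show ?thesis
    by simp
qed

lemma leaf_series_closed_form: "2 * leaf_series = fps_X * (1 + central_binomial_series)"
proof -
  have "fps_X * (1 + central_binomial_series) * (2 - forest_series)
      = fps_X * (2 - forest_series) + fps_X * (central_binomial_series * (2 - forest_series))"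
    by (simp add: algebra_simps)
  also have "\<dots> = 2 * (leaf_series * (2 - forest_series))"
    unfolding central_binomial_series_mult leaf_series_mult by (simp add: algebra_simps)
  finally show ?thesis
    using two_minus_forest_series_nonzero by simp
qed

lemma depth_series_closed_form: "(1 - 4 * fps_X) * depth_series = fps_X ^ 2"
proof -
  have "forest_series ^ 2 * ((1 - 4 * fps_X) * depth_series) = forest_series ^ 2 * fps_X ^ 2"
    using two_minus_forest_series_sq depth_series_mult leaf_series_mult X_forest_series_sq
    by algebra
  moreover have "forest_series ^ 2 \<noteq> 0"
    by (rule fps_nonzero_if_nth_0) (simp add: forest_series_nth_0 power2_eq_square)
  ultimately show ?thesis
    by simp
qed

lemma fps_nth_Suc_one_minus_const_X_mult:
  fixes c :: "'a::comm_ring_1"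
  shows "fps_nth ((1 - fps_const c * fps_X) * f) (Suc n) = fps_nth f (Suc n) - c * fps_nth f n"
  by (simp add: left_diff_distrib mult.assoc)

lemma depth_series_nth: "fps_nth depth_series n = (if n < 2 then 0 else 4 ^ (n - 2))"
proof (induction n)
  case 0
  show ?case
    using arg_cong[OF depth_series_closed_form, of "\<lambda>f. fps_nth f 0"] by simp
next
  case (Suc n)
  have "fps_nth depth_series (Suc n) - 4 * fps_nth depth_series n = fps_nth (fps_X ^ 2) (Suc n)"
    using arg_cong[OF depth_series_closed_form, of "\<lambda>f. fps_nth f (Suc n)"]
    by (simp only: numeral_fps_const fps_nth_Suc_one_minus_const_X_mult)
  moreover have "n - 1 = Suc (n - 2)" if "n \<ge> 2"
    using that by simp
  ultimately show ?case
    using Suc.IH by (cases "n < 2") (auto simp: fps_X_power_nth)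
qed

lemma leaf_series_nth:
  "n \<ge> 2 \<Longrightarrow> 2 * fps_nth leaf_series n = real ((2 * (n - 1)) choose (n - 1))"
  using arg_cong[OF leaf_series_closed_form, of "\<lambda>f. fps_nth f n"]
  by (cases n) (simp_all add: central_binomial_series_def numeral_fps_const)

lemma real_total_leaf_depth: "real (total_leaf_depth n) = fps_nth depth_series n"
  by (simp add: total_leaf_depth_def depth_series_def tree_gf_def sum_length_leaves)

lemma real_total_leaves: "real (total_leaves n) = fps_nth leaf_series n"
  by (simp add: total_leaves_def leaf_series_def tree_gf_def card_leaves)

lemma total_leaf_depth_eq: "n \<ge> 2 \<Longrightarrow> total_leaf_depth n = 4 ^ (n - 2)"
  using real_total_leaf_depth[of n] by (simp add: depth_series_nth flip: of_nat_eq_iff)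

lemma total_leaves_eq: "n \<ge> 2 \<Longrightarrow> real (total_leaves n) = real ((2 * n - 2) choose (n - 1)) / 2"
  using leaf_series_nth[of n] by (simp add: real_total_leaves right_diff_distrib')

lemma dfact_pos: "0 < dfact n"
  by (induction n rule: dfact.induct) simp_all

lemma dfact_even: "dfact (2 * m) = 2 ^ m * fact m"
proof (induction m)
  case (Suc m)
  have "2 * Suc m = Suc (Suc (2 * m))"
    by simp
  then show ?case
    using Suc.IH by (simp only:) (simp add: algebra_simps)
qed simp

lemma dfact_Suc_mult: "dfact (Suc n) * dfact n = fact (Suc n)"
  by (induction n) (simp_all add: algebra_simps)

lemma dfact_central_binomial: "dfact (2 * m) * ((2 * m) choose m) = 4 ^ m * dfact (2 * m - 1)"
proof (cases "m = 0")
  case False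
  have "dfact (2 * m) * ((2 * m) choose m) * dfact (2 * m) = 4 ^ m * (fact m * fact m * ((2 * m) choose m))"
    unfolding dfact_even by (simp add: power_mult_distrib[symmetric] algebra_simps)
  also have "\<dots> = 4 ^ m * fact (2 * m)"
    using binomial_fact_lemma[of m "2 * m"] by simp
  also have "\<dots> = 4 ^ m * dfact (2 * m - 1) * dfact (2 * m)"
    using dfact_Suc_mult[of "2 * m - 1"] False by (simp add: mult.commute)
  finally show ?thesis
    using dfact_pos[of "2 * m"] by simp
qed simp

text \<open>The Wallis partial products \<open>wallis_ratio m ^ 2 / (2 m + 1)\<close> increase to \<open>pi / 2\<close>, while
  \<open>wallis_ratio m ^ 2 / m\<close> decreases to \<open>pi\<close>.\<close>

definition wallis_ratio :: "nat \<Rightarrow> real" where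
  "wallis_ratio m = real (dfact (2 * m)) / real (dfact (2 * m - 1))"

lemma wallis_ratio_pos: "0 < wallis_ratio m"
  using dfact_pos by (simp add: wallis_ratio_def)

lemma wallis_ratio_central_binomial: "wallis_ratio m = 4 ^ m / real ((2 * m) choose m)"
  using arg_cong[OF dfact_central_binomial[of m], of real]
  by (simp add: wallis_ratio_def field_simps dfact_pos)

lemma wallis_ratio_Suc: "wallis_ratio (Suc m) = wallis_ratio m * (2 * m + 2) / (2 * m + 1)"
proof -
  have "2 * Suc m = Suc (Suc (2 * m))" and "2 * Suc m - 1 = Suc (2 * m)"
    by simp_all
  moreover have "dfact (Suc (2 * m)) = (2 * m + 1) * dfact (2 * m - 1)"
    by (cases m) (simp_all add: numeral_2_eq_2)
  ultimately show ?thesis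
    using dfact_pos[of "2 * m - 1"] by (simp add: wallis_ratio_def field_simps)
qed

lemma wallis_partial_product:
  "(\<Prod>k=1..m. 4 * real k ^ 2 / (4 * real k ^ 2 - 1)) = wallis_ratio m ^ 2 / (2 * m + 1)"
proof (induction m)
  case 0
  show ?case
    by (simp add: wallis_ratio_def)
next
  case (Suc m)
  have "(\<Prod>k=1..Suc m. 4 * real k ^ 2 / (4 * real k ^ 2 - 1))
      = wallis_ratio m ^ 2 / (2 * m + 1) * (4 * (real m + 1) ^ 2 / ((2 * m + 1) * (2 * m + 3)))"
    using Suc.IH by (simp add: prod.cl_ivl_Suc algebra_simps power2_eq_square)
  also have "\<dots> = wallis_ratio (Suc m) ^ 2 / (2 * Suc m + 1)"
    by (simp add: wallis_ratio_Suc field_simps power2_eq_square)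
  finally show ?case .
qed

lemma wallis_ratio_sq_upper: "wallis_ratio m ^ 2 \<le> pi * (2 * m + 1) / 2"
proof -
  let ?W = "\<lambda>m. \<Prod>k=1..m. 4 * real k ^ 2 / (4 * real k ^ 2 - 1)"
  have "incseq ?W"
  proof (rule incseq_SucI)
    fix m
    let ?f = "4 * real (Suc m) ^ 2 / (4 * real (Suc m) ^ 2 - 1)"
    have "1 \<le> real (Suc m) ^ 2"
      by simp
    then have "1 < 4 * real (Suc m) ^ 2"
      by linarith
    then have "1 \<le> ?f"
      by (simp only: le_divide_eq) simp
    moreover have "0 \<le> ?W m"
      unfolding wallis_partial_product by simp
    ultimately have "?W m * 1 \<le> ?W m * ?f"
      by (rule mult_left_mono)
    then show "?W m \<le> ?W (Suc m)"
      by (simp add: prod.cl_ivl_Suc)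
  qed
  then have "?W m \<le> pi / 2"
    using wallis by (rule incseq_le)
  then show ?thesis
    unfolding wallis_partial_product by (simp add: field_simps)
qed

lemma wallis_ratio_sq_lower:
  assumes "1 \<le> m"
  shows "pi * m \<le> wallis_ratio m ^ 2"
proof -
  define S where "S k = wallis_ratio (Suc k) ^ 2 / real (Suc k)" for k
  have "decseq S"
  proof (rule decseq_SucI)
    fix k
    define a where "a = real k"
    have "0 \<le> a"
      by (simp add: a_def)
    then have "(2 * a + 4) ^ 2 / ((2 * a + 3) ^ 2 * (a + 2)) \<le> 1 / (a + 1)"
      by (simp add: divide_simps add_pos_nonneg power2_eq_square algebra_simps)
    then have "wallis_ratio (Suc k) ^ 2 * ((2 * a + 4) ^ 2 / ((2 * a + 3) ^ 2 * (a + 2)))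
        \<le> wallis_ratio (Suc k) ^ 2 * (1 / (a + 1))"
      by (rule mult_left_mono) simp
    moreover have "S (Suc k) = wallis_ratio (Suc k) ^ 2 * ((2 * a + 4) ^ 2 / ((2 * a + 3) ^ 2 * (a + 2)))"
      unfolding S_def wallis_ratio_Suc[of "Suc k"] a_def
      by (simp add: power_divide field_simps power2_eq_square)
    moreover have "S k = wallis_ratio (Suc k) ^ 2 * (1 / (a + 1))"
      by (simp add: S_def a_def add.commute)
    ultimately show "S (Suc k) \<le> S k"
      by simp
  qed
  moreover have "S \<longlonglongrightarrow> pi"
  proof -
    let ?W = "\<lambda>m. \<Prod>k=1..m. 4 * real k ^ 2 / (4 * real k ^ 2 - 1)"
    have "(\<lambda>k. ?W (Suc k) * (2 + inverse (real (Suc k)))) \<longlonglongrightarrow> pi / 2 * (2 + 0)"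
      by (intro tendsto_intros LIMSEQ_inverse_real_of_nat wallis[THEN LIMSEQ_Suc])
    moreover have "?W (Suc k) * (2 + inverse (real (Suc k))) = S k" for k
    proof -
      have "2 + inverse (real (Suc k)) = real (2 * Suc k + 1) / real (Suc k)"
        by (simp add: field_simps)
      then show ?thesis
        unfolding wallis_partial_product S_def by (simp del: of_nat_Suc)
    qed
    ultimately show ?thesis
      by simp
  qed
  ultimately have "pi \<le> S (m - 1)"
    by (rule decseq_ge)
  then show ?thesis
    using assms by (simp add: S_def field_simps)
qed

lemma abs_diff_sqrt_le:
  fixes r c x :: real
  assumes "0 \<le> r" "0 < c" "0 < x" "c * (x - 1) \<le> r ^ 2" "r ^ 2 \<le> c * x"
  shows "\<bar>r - sqrt (c * x)\<bar> \<le> sqrt c / sqrt x"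
proof -
  define s where "s = sqrt (c * x)"
  have s: "0 < s" "s ^ 2 = c * x"
    using assms by (simp_all add: s_def)
  have "r \<le> s"
    using assms(5) by (simp add: s_def real_le_rsqrt)
  then have "(s - r) * s \<le> (s - r) * (s + r)"
    using assms(1) by (intro mult_left_mono) auto
  also have "\<dots> = s ^ 2 - r ^ 2"
    by (simp add: algebra_simps power2_eq_square)
  also have "\<dots> \<le> c"
    using s assms(4) by (simp add: algebra_simps)
  finally have "s - r \<le> c / s"
    using s by (simp add: field_simps)
  also have "c / s = sqrt c / sqrt x"
    using assms(2,3) by (simp add: s_def real_sqrt_mult field_simps)
  finally show ?thesis
    using \<open>r \<le> s\<close> by (simp add: s_def)
qed

lemma expected_leaf_depth_eq_wallis_ratio:
  assumes "n \<ge> 2"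
  shows "expected_leaf_depth n = wallis_ratio (n - 1) / 2"
proof -
  have "n - 1 = Suc (n - 2)"
    using assms by simp
  then have "(4::real) ^ (n - 1) = 4 * 4 ^ (n - 2)"
    by simp
  moreover have "0 < real ((2 * n - 2) choose (n - 1))" and "2 * n - 2 = 2 * (n - 1)"
    using assms by simp_all
  ultimately show ?thesis
    using assms
    by (simp add: expected_leaf_depth_def total_leaf_depth_eq total_leaves_eq wallis_ratio_central_binomial
                  field_simps)
qed

lemma expected_leaf_depth_approx:
  assumes "n \<ge> 2"
  shows "\<bar>expected_leaf_depth n - sqrt (pi * n) / 2\<bar> \<le> sqrt pi / (2 * sqrt n)"
proof -
  define m where "m = n - 1"
  have m: "1 \<le> m" "real m = real n - 1"
    using assms by (simp_all add: m_def of_nat_diff)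
  have "pi * (real n - 1) \<le> wallis_ratio m ^ 2"
    using wallis_ratio_sq_lower[OF m(1)] m(2) by simp
  moreover have "real n = real m + 1"
    using m(2) by simp
  then have "pi * real (2 * m + 1) / 2 = pi * real n - pi / 2"
    by (simp add: field_simps)
  then have "wallis_ratio m ^ 2 \<le> pi * real n"
    using wallis_ratio_sq_upper[of m] pi_gt_zero by linarith
  ultimately have "\<bar>wallis_ratio m - sqrt (pi * n)\<bar> \<le> sqrt pi / sqrt n"
    using assms wallis_ratio_pos[of m] by (intro abs_diff_sqrt_le) auto
  then show ?thesis
    using assms by (simp add: expected_leaf_depth_eq_wallis_ratio m_def field_simps)
qed

theorem mainTheorem7:
  shows "(\<forall>n\<ge>2. total_leaf_depth n = 4 ^ (n - 2))
       \<and> (\<forall>n\<ge>2. real (total_leaves n) = real ((2*n - 2) choose (n - 1)) / 2)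
       \<and> (\<forall>n\<ge>2. expected_leaf_depth n = real (dfact (2*n - 2)) / (2 * real (dfact (2*n - 3))))
       \<and> (\<lambda>n. expected_leaf_depth n - sqrt (pi * real n) / 2) \<in> O(\<lambda>n. 1 / sqrt (real n))"
proof (intro conjI allI impI)
  fix n :: nat
  assume n: "n \<ge> 2"
  show "total_leaf_depth n = 4 ^ (n - 2)"
    using n by (rule total_leaf_depth_eq)
  show "real (total_leaves n) = real ((2*n - 2) choose (n - 1)) / 2"
    using n by (rule total_leaves_eq)
  have "2 * (n - 1) = 2 * n - 2" "2 * (n - 1) - 1 = 2 * n - 3"
    using n by simp_all
  then show "expected_leaf_depth n = real (dfact (2*n - 2)) / (2 * real (dfact (2*n - 3)))"
    using n by (simp add: expected_leaf_depth_eq_wallis_ratio wallis_ratio_def)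
next
  have "eventually (\<lambda>n. norm (expected_leaf_depth n - sqrt (pi * real n) / 2)
      \<le> sqrt pi / 2 * norm (1 / sqrt (real n))) at_top"
    using eventually_ge_at_top[of 2]
    by eventually_elim (use expected_leaf_depth_approx in simp)
  then show "(\<lambda>n. expected_leaf_depth n - sqrt (pi * real n) / 2) \<in> O(\<lambda>n. 1 / sqrt (real n))"
    by (rule bigoI)
qed

end
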